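(* Let $\mathbb{K}\in\{\mathbb{R},\mathbb{C}\}$, $U:=\mathbb{K}^n$, $\mathbf{u}^1,\dots,\mathbf{u}^m\in U$, $\mathbf{U}_m:=[\mathbf{u}^1,\dots,\mathbf{u}^m]$, $U_m:=\mathrm{range}(\mathbf{U}_m)$, and $\mathbf{\Theta}\in\mathbb{K}^{k\times n}$ with $\mathbf{U}_m^{\mathbf{\Theta}}:=\mathbf{\Theta}\mathbf{U}_m$. Let $\mathbf{G}:=(\mathbf{U}_m^{\mathbf{\Theta}})^{\mathrm{H}}\mathbf{U}_m^{\mathbf{\Theta}}$, $l:=\mathrm{rank}(\mathbf{U}_m^{\mathbf{\Theta}})$, and let $(\lambda_i,\mathbf{t}_i)_{i=1}^{l}$ be eigenpairs of $\mathbf{G}$ associated with its nonzero eigenvalues, with orthonormal eigenvectors and $\lambda_1\ge\dots\ge\lambda_l$. For $r\le l$ set $\mathbf{T}_r:=[\mathbf{t}_1,\dots,\mathbf{t}_r]$ and $U_r:=\mathrm{range}(\mathbf{U}_m\mathbf{T}_r)$. For a subspace $V\subseteq U_m$ let $\mathbf{P}_V^{\mathbf{\Theta}}\mathbf{x}\in\arg\min_{\mathbf{w}\in V}\|\mathbf{\Theta}(\mathbf{x}-\mathbf{w})\|$ for $\mathbf{x}\in U_m$, and define $$\Delta^{\mathrm{POD}}(V):=\frac1m\sum_{i=1}^m\|\mathbf{\Theta}(\mathbf{u}^i-\mathbf{P}_V^{\mathbf{\Theta}}\mathbf{u}^i)\|^2.$$ Then $\Delta^{\mathrm{POD}}(U_r)=\frac1m\sum_{i=r+1}^{l}\lambda_i$,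 and for every subspace $V_r\subseteq U_m$ with $\dim(V_r)\le r$, $\Delta^{\mathrm{POD}}(U_r)\le\Delta^{\mathrm{POD}}(V_r)$.
   Context: $\|\cdot\|$ is the Euclidean norm on $\mathbb{K}^k$; $\mathbf{M}^{\mathrm{H}}$ is the (conjugate) transpose; $\mathrm{range}$ is column space. The value $\|\mathbf{\Theta}(\mathbf{x}-\mathbf{P}_V^{\mathbf{\Theta}}\mathbf{x})\|$ does not depend on the choice of minimizer. *)

theory Defs
  imports "Jordan_Normal_Form.Schur_Decomposition" "Jordan_Normal_Form.DL_Rank"
begin

definition vnorm :: "'a::real_normed_field vec \<Rightarrow> real" where
  "vnorm x = sqrt (\<Sum>i<dim_vec x. (norm (x $ i))\<^sup>2)"

definition mat_range :: "'a::field mat \<Rightarrow> 'a vec set" where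
  "mat_range A = {A *\<^sub>v c | c. c \<in> carrier_vec (dim_col A)}"

definition theta_proj :: "'a::{real_normed_field,field} mat \<Rightarrow> 'a vec set \<Rightarrow> 'a vec \<Rightarrow> 'a vec" where
  "theta_proj \<Theta> V x = (SOME w. w \<in> V \<and>
      (\<forall>w'\<in>V. vnorm (\<Theta> *\<^sub>v (x - w)) \<le> vnorm (\<Theta> *\<^sub>v (x - w'))))"

text \<open>Delta^POD(V) for snapshots u^1..u^m = columns 0..m-1 of U.\<close>
definition delta_pod :: "'a::{real_normed_field,field} mat \<Rightarrow> 'a mat \<Rightarrow> 'a vec set \<Rightarrow> real" where
  "delta_pod \<Theta> U V = (1 / real (dim_col U)) *
     (\<Sum>i<dim_col U. (vnorm (\<Theta> *\<^sub>v (col U i - theta_proj \<Theta> V (col U i))))\<^sup>2)"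

definition is_subspace :: "nat \<Rightarrow> 'a::field vec set \<Rightarrow> bool" where
  "is_subspace n V = VectorSpace.subspace class_ring V (module_vec TYPE('a) n)"

definition subspace_dim :: "nat \<Rightarrow> 'a::field vec set \<Rightarrow> nat" where
  "subspace_dim n V = vectorspace.dim class_ring ((module_vec TYPE('a) n)\<lparr>carrier := V\<rparr>)"

end

(* Write A = Theta U, with columns a_i = Theta u^i.  The vectors e_j = A t_j / sqrt(lam_j) are an
   orthonormal basis of range A, and sum_i |<a_i, w>|^2 = sum_j lam_j |<e_j, w>|^2 for every w.
   If Theta V is spanned by an orthonormal family w_1, ..., w_p, Pythagoras turns the Theta-projection
   error of a_i into |a_i|^2 - sum_i' |<a_i, w_i'>|^2, hence
   m Delta(V) = sum_j lam_j - sum_j lam_j c_j  with weights  c_j = sum_i |<e_j, w_i>|^2.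
   Bessel's inequality gives 0 <= c_j <= 1 and sum_j c_j <= p <= dim V <= r, and for decreasing lam
   such weights satisfy sum_j lam_j c_j <= lam_1 + ... + lam_r.  For V = U_r the image Theta U_r is
   spanned by e_1, ..., e_r, whose weights c_j = [j <= r] attain this bound. *)

theory Submission
  imports Defs
begin

section \<open>Finite families of vectors and their spans\<close>

definition sq_vnorm :: "'a::real_normed_field vec \<Rightarrow> real" where
  "sq_vnorm x = (\<Sum>i<dim_vec x. (norm (x $ i))\<^sup>2)"

lemma sq_vnorm_nonneg: "sq_vnorm x \<ge> 0"
  unfolding sq_vnorm_def by (intro sum_nonneg) auto

lemma vnorm_square: "(vnorm x)\<^sup>2 = sq_vnorm x"
  unfolding vnorm_def sq_vnorm_def[symmetric] using sq_vnorm_nonneg by simp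

lemma vnorm_le_iff: "vnorm x \<le> vnorm y \<longleftrightarrow> sq_vnorm x \<le> sq_vnorm y"
  unfolding vnorm_def sq_vnorm_def by simp

definition lincomb_fam :: "nat \<Rightarrow> nat \<Rightarrow> (nat \<Rightarrow> 'a::comm_ring_1) \<Rightarrow> (nat \<Rightarrow> 'a vec) \<Rightarrow> 'a vec" where
  "lincomb_fam k q c f = vec k (\<lambda>i. \<Sum>j<q. c j * f j $ i)"

definition span_fam :: "nat \<Rightarrow> nat \<Rightarrow> (nat \<Rightarrow> 'a::comm_ring_1 vec) \<Rightarrow> 'a vec set" where
  "span_fam k q f = range (\<lambda>c. lincomb_fam k q c f)"

definition orthonormal_fam :: "nat \<Rightarrow> nat \<Rightarrow> (nat \<Rightarrow> 'a::conjugatable_field vec) \<Rightarrow> bool" where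
  "orthonormal_fam k p e \<longleftrightarrow> (\<forall>j<p. e j \<in> carrier_vec k) \<and>
     (\<forall>i<p. \<forall>j<p. e i \<bullet>c e j = (if i = j then 1 else 0))"

lemma lincomb_fam_carrier[simp]: "lincomb_fam k q c f \<in> carrier_vec k"
  and lincomb_fam_dim[simp]: "dim_vec (lincomb_fam k q c f) = k"
  and lincomb_fam_index[simp]: "i < k \<Longrightarrow> lincomb_fam k q c f $ i = (\<Sum>j<q. c j * f j $ i)"
  unfolding lincomb_fam_def by simp_all

lemma lincomb_fam_in_span_fam[simp]: "lincomb_fam k q c f \<in> span_fam k q f"
  unfolding span_fam_def by simp

lemma span_fam_carrier: "x \<in> span_fam k q f \<Longrightarrow> x \<in> carrier_vec k"
  unfolding span_fam_def by auto

lemma lincomb_fam_cong: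
  "(\<And>j. j < q \<Longrightarrow> c j = d j) \<Longrightarrow> (\<And>j. j < q \<Longrightarrow> f j = g j) \<Longrightarrow>
     lincomb_fam k q c f = lincomb_fam k q d g"
  by (rule eq_vecI) (auto intro!: sum.cong)

lemma span_fam_cong: "(\<And>j. j < q \<Longrightarrow> f j = g j) \<Longrightarrow> span_fam k q f = span_fam k q g"
  unfolding span_fam_def using lincomb_fam_cong[of q _ _ f g k] by simp

lemma lincomb_fam_add_smult:
  "lincomb_fam k q c f + a \<cdot>\<^sub>v lincomb_fam k q d f = lincomb_fam k q (\<lambda>j. c j + a * d j) f"
  by (rule eq_vecI) (auto simp: sum.distrib sum_distrib_left algebra_simps)

lemma span_fam_add_smult:
  "x \<in> span_fam k q f \<Longrightarrow> y \<in> span_fam k q f \<Longrightarrow> x + a \<cdot>\<^sub>v y \<in> span_fam k q f"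
  unfolding span_fam_def by (auto simp: lincomb_fam_add_smult)

lemma span_fam_Suc:
  assumes "f q \<in> carrier_vec k"
  shows "span_fam k (Suc q) f = {x + a \<cdot>\<^sub>v f q | x a. x \<in> span_fam k q f}"
proof (intro equalityI subsetI)
  fix y assume "y \<in> span_fam k (Suc q) f"
  then obtain c where "y = lincomb_fam k (Suc q) c f" unfolding span_fam_def by auto
  then have "y = lincomb_fam k q c f + c q \<cdot>\<^sub>v f q"
    using assms by auto
  then show "y \<in> {x + a \<cdot>\<^sub>v f q | x a. x \<in> span_fam k q f}" by auto
next
  fix y assume "y \<in> {x + a \<cdot>\<^sub>v f q | x a. x \<in> span_fam k q f}"
  then obtain c a where "y = lincomb_fam k q c f + a \<cdot>\<^sub>v f q" unfolding span_fam_def by auto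
  also have "\<dots> = lincomb_fam k (Suc q) (c(q := a)) f"
    using assms by (auto intro!: sum.cong)
  finally show "y \<in> span_fam k (Suc q) f" by simp
qed

lemma span_fam_self:
  assumes "j < q" "f j \<in> carrier_vec k"
  shows "f j \<in> span_fam k q f"
proof -
  have "lincomb_fam k q (\<lambda>i. if i = j then 1 else 0) f = f j"
    using assms by (intro eq_vecI) (auto simp: if_distrib[of "\<lambda>c. c * _"] cong: if_cong)
  then show ?thesis by (metis lincomb_fam_in_span_fam)
qed

lemma span_fam_Suc_exchange:
  assumes v: "v = P + s \<cdot>\<^sub>v z" and P: "P \<in> span_fam k p e" and s: "(s :: 'a::field) \<noteq> 0"
    and z: "z \<in> carrier_vec k"
  shows "{x + a \<cdot>\<^sub>v z | x a. x \<in> span_fam k p e} = {x + a \<cdot>\<^sub>v v | x a. x \<in> span_fam k p e}"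
proof (intro equalityI subsetI; elim CollectE exE conjE)
  fix w x a assume w: "w = x + a \<cdot>\<^sub>v z" and x: "x \<in> span_fam k p e"
  have "w = (x + (- a / s) \<cdot>\<^sub>v P) + (a / s) \<cdot>\<^sub>v v"
    unfolding w v using span_fam_carrier[OF x] span_fam_carrier[OF P] z s
    by (intro eq_vecI) (auto simp: field_simps)
  then show "w \<in> {x + a \<cdot>\<^sub>v v | x a. x \<in> span_fam k p e}"
    using span_fam_add_smult[OF x P, of "- a / s"] by auto
next
  fix w x a assume w: "w = x + a \<cdot>\<^sub>v v" and x: "x \<in> span_fam k p e"
  have "w = (x + a \<cdot>\<^sub>v P) + (a * s) \<cdot>\<^sub>v z"
    unfolding w v using span_fam_carrier[OF x] span_fam_carrier[OF P] z
    by (intro eq_vecI) (auto simp: algebra_simps)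
  then show "w \<in> {x + a \<cdot>\<^sub>v z | x a. x \<in> span_fam k p e}"
    using span_fam_add_smult[OF x P, of a] by auto
qed

lemma cscalar_prod_swap:
  "x \<in> carrier_vec k \<Longrightarrow> y \<in> carrier_vec k \<Longrightarrow> y \<bullet>c x = conjugate (x \<bullet>c (y :: 'a::conjugatable_field vec))"
  by (metis conjugate_conjugate_sprod conjugate_vec_sprod_comm)

lemma cscalar_prod_lincomb_fam_left:
  assumes "w \<in> carrier_vec k"
  shows "lincomb_fam k q c f \<bullet>c w = (\<Sum>j<q. c j * (f j \<bullet>c (w :: 'a::conjugatable_field vec)))"
proof -
  have "lincomb_fam k q c f \<bullet>c w = (\<Sum>i<k. \<Sum>j<q. c j * f j $ i * conjugate (w $ i))"
    unfolding scalar_prod_def using assms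
    by (auto simp: atLeast0LessThan sum_distrib_right intro!: sum.cong)
  also have "\<dots> = (\<Sum>j<q. c j * (f j \<bullet>c w))"
    unfolding scalar_prod_def using assms
    by (auto simp: atLeast0LessThan sum_distrib_left mult.assoc sum.swap[of _ "{..<k}"] intro!: sum.cong)
  finally show ?thesis .
qed

lemma cscalar_prod_lincomb_fam_right:
  assumes w: "w \<in> carrier_vec k" and f: "\<And>j. j < q \<Longrightarrow> f j \<in> carrier_vec k"
  shows "w \<bullet>c lincomb_fam k q c f = (\<Sum>j<q. conjugate (c j) * (w \<bullet>c (f j :: 'a::conjugatable_field vec)))"
proof -
  have "w \<bullet>c lincomb_fam k q c f = conjugate (\<Sum>j<q. c j * (f j \<bullet>c w))"
    using cscalar_prod_swap[OF lincomb_fam_carrier w] by (simp add: cscalar_prod_lincomb_fam_left[OF w])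
  also have "\<dots> = (\<Sum>j<q. conjugate (c j) * (w \<bullet>c f j))"
    using cscalar_prod_swap[OF _ w] f by (simp add: sum_conjugate conjugate_dist_mul)
  finally show ?thesis .
qed

lemma orthonormal_fam_carrier: "orthonormal_fam k p e \<Longrightarrow> j < p \<Longrightarrow> e j \<in> carrier_vec k"
  and orthonormal_fam_cscalar_prod:
    "orthonormal_fam k p e \<Longrightarrow> i < p \<Longrightarrow> j < p \<Longrightarrow> e i \<bullet>c e j = (if i = j then 1 else 0)"
  unfolding orthonormal_fam_def by auto

lemma orthonormal_fam_mono: "orthonormal_fam k p e \<Longrightarrow> r \<le> p \<Longrightarrow> orthonormal_fam k r e"
  unfolding orthonormal_fam_def by auto

lemma orthonormal_fam_extend:
  assumes "orthonormal_fam k p e" "z \<in> carrier_vec k" "z \<bullet>c z = 1"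
    and "\<And>j. j < p \<Longrightarrow> z \<bullet>c e j = 0"
  shows "orthonormal_fam k (Suc p) (e(p := z))"
proof -
  have "e j \<bullet>c z = 0" if "j < p" for j
    using assms cscalar_prod_swap[OF assms(2) orthonormal_fam_carrier] that by fastforce
  with assms show ?thesis unfolding orthonormal_fam_def by (auto simp: less_Suc_eq)
qed

lemma lincomb_fam_cscalar_prod_orthonormal:
  assumes "orthonormal_fam k p e" "j < p"
  shows "lincomb_fam k p c e \<bullet>c e j = c j"
proof -
  have "lincomb_fam k p c e \<bullet>c e j = (\<Sum>i<p. c i * (if i = j then 1 else 0))"
    using assms by (simp add: cscalar_prod_lincomb_fam_left orthonormal_fam_carrier
        orthonormal_fam_cscalar_prod)
  also have "\<dots> = (\<Sum>i<p. if i = j then c j else 0)" by (rule sum.cong) auto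
  finally show ?thesis using assms(2) by simp
qed

lemma cscalar_prod_smult_smult:
  assumes "x \<in> carrier_vec k" "y \<in> carrier_vec k"
  shows "(a \<cdot>\<^sub>v x) \<bullet>c (c \<cdot>\<^sub>v y) = a * conjugate c * (x \<bullet>c (y :: 'a::conjugatable_field vec))"
  using assms by (simp add: conjugate_smult_vec smult_scalar_prod_distrib[of _ k]
      scalar_prod_smult_distrib[of _ k] mult.assoc)

definition orth_proj :: "nat \<Rightarrow> nat \<Rightarrow> (nat \<Rightarrow> 'a::conjugatable_field vec) \<Rightarrow> 'a vec \<Rightarrow> 'a vec" where
  "orth_proj k p e y = lincomb_fam k p (\<lambda>j. y \<bullet>c e j) e"

lemma orth_proj_in_span_fam[simp]: "orth_proj k p e y \<in> span_fam k p e"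
  unfolding orth_proj_def by simp

lemma orth_proj_residual_orthogonal:
  assumes "orthonormal_fam k p e" "y \<in> carrier_vec k" "j < p"
  shows "(y - orth_proj k p e y) \<bullet>c e j = 0"
  using assms unfolding orth_proj_def
  by (subst minus_scalar_prod_distrib[of _ k])
     (auto simp: orthonormal_fam_carrier lincomb_fam_cscalar_prod_orthonormal)

lemma mult_mat_vec_eq_lincomb_fam:
  "A \<in> carrier_mat k q \<Longrightarrow> A *\<^sub>v vec q c = lincomb_fam k q c (col A)"
  by (rule eq_vecI) (auto simp: scalar_prod_def atLeast0LessThan mult.commute intro!: sum.cong)

lemma mat_range_span_fam:
  assumes "A \<in> carrier_mat k q"
  shows "mat_range A = span_fam k q (col A)"
proof (intro equalityI subsetI)
  fix x assume "x \<in> mat_range A"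
  then obtain c where "x = A *\<^sub>v c" "c \<in> carrier_vec q" unfolding mat_range_def using assms by auto
  then have "x = lincomb_fam k q (\<lambda>j. c $ j) (col A)"
    using mult_mat_vec_eq_lincomb_fam[OF assms] by (metis carrier_vecD eq_vecI index_vec dim_vec)
  then show "x \<in> span_fam k q (col A)" by simp
next
  fix x assume "x \<in> span_fam k q (col A)"
  then obtain c where "x = A *\<^sub>v vec q c" unfolding span_fam_def
    using mult_mat_vec_eq_lincomb_fam[OF assms] by auto
  then show "x \<in> mat_range A" unfolding mat_range_def using assms by auto
qed

lemma mult_mat_vec_lincomb_fam:
  assumes T: "\<Theta> \<in> carrier_mat k n" and f: "\<And>j. j < q \<Longrightarrow> f j \<in> carrier_vec n"
  shows "\<Theta> *\<^sub>v lincomb_fam n q c f = lincomb_fam k q c (\<lambda>j. \<Theta> *\<^sub>v f j)"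
proof (rule eq_vecI)
  fix i assume "i < dim_vec (lincomb_fam k q c (\<lambda>j. \<Theta> *\<^sub>v f j))"
  then have i: "i < k" by simp
  have fd: "\<And>j. j < q \<Longrightarrow> dim_vec (f j) = n" using f by auto
  have "(\<Theta> *\<^sub>v lincomb_fam n q c f) $ i = (\<Sum>r<n. \<Theta> $$ (i, r) * (\<Sum>j<q. c j * f j $ r))"
    using T i by (auto simp: scalar_prod_def row_def atLeast0LessThan intro!: sum.cong)
  also have "\<dots> = (\<Sum>j<q. c j * (\<Sum>r<n. \<Theta> $$ (i, r) * f j $ r))"
    by (simp add: sum_distrib_left mult.left_commute sum.swap[of _ "{..<n}"])
  also have "\<dots> = lincomb_fam k q c (\<lambda>j. \<Theta> *\<^sub>v f j) $ i"
    using T i fd by (auto simp: scalar_prod_def row_def atLeast0LessThan intro!: sum.cong)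
  finally show "(\<Theta> *\<^sub>v lincomb_fam n q c f) $ i = lincomb_fam k q c (\<lambda>j. \<Theta> *\<^sub>v f j) $ i" .
qed (use T in simp)

lemma image_span_fam:
  assumes "\<Theta> \<in> carrier_mat k n" and "\<And>j. j < q \<Longrightarrow> f j \<in> carrier_vec n"
  shows "(\<lambda>v. \<Theta> *\<^sub>v v) ` span_fam n q f = span_fam k q (\<lambda>j. \<Theta> *\<^sub>v f j)"
  unfolding span_fam_def using mult_mat_vec_lincomb_fam[OF assms] by (auto simp: image_image)

lemma image_mat_range:
  assumes "\<Theta> \<in> carrier_mat k n" "B \<in> carrier_mat n q"
  shows "(\<lambda>v. \<Theta> *\<^sub>v v) ` mat_range B = mat_range (\<Theta> * B)"
proof -
  have "\<Theta> *\<^sub>v (B *\<^sub>v c) = (\<Theta> * B) *\<^sub>v c" if "c \<in> carrier_vec q" for c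
    using assms that by simp
  then show ?thesis unfolding mat_range_def using assms
    by (auto simp del: assoc_mult_mat_vec) (metis (mono_tags, lifting) image_eqI mem_Collect_eq)
qed

lemma image_mat_range_mult:
  assumes "\<Theta> \<in> carrier_mat k n" "U \<in> carrier_mat n m" "T \<in> carrier_mat m r"
  shows "(\<lambda>v. \<Theta> *\<^sub>v v) ` mat_range (U * T) = mat_range (\<Theta> * U * T)"
  using image_mat_range[of _ k n "U * T" r] assms by (simp add: assoc_mult_mat[of _ k n U m T r])

lemma mat_range_carrier: "A \<in> carrier_mat k m \<Longrightarrow> mat_range A \<subseteq> carrier_vec k"
  unfolding mat_range_def by auto

lemma span_fam_scale:
  assumes "\<And>j. j < q \<Longrightarrow> f j = d j \<cdot>\<^sub>v g j" "\<And>j. j < q \<Longrightarrow> (d j :: 'a::field) \<noteq> 0"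
    and "\<And>j. j < q \<Longrightarrow> g j \<in> carrier_vec k"
  shows "span_fam k q f = span_fam k q g"
proof -
  have fi: "f j $ i = d j * g j $ i" if "j < q" "i < k" for i j
    using assms(1)[OF that(1)] assms(3)[OF that(1)] that(2) by simp
  have f_g: "lincomb_fam k q c f = lincomb_fam k q (\<lambda>j. c j * d j) g" for c
    by (rule eq_vecI) (auto intro!: sum.cong simp: fi mult.assoc)
  have g_f: "lincomb_fam k q c g = lincomb_fam k q (\<lambda>j. c j / d j) f" for c
    by (rule eq_vecI) (auto intro!: sum.cong simp: fi assms(2))
  show ?thesis unfolding span_fam_def
  proof (intro equalityI subsetI)
    fix x assume "x \<in> range (\<lambda>c. lincomb_fam k q c f)"
    then show "x \<in> range (\<lambda>c. lincomb_fam k q c g)" using f_g by auto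
  next
    fix x assume "x \<in> range (\<lambda>c. lincomb_fam k q c g)"
    then show "x \<in> range (\<lambda>c. lincomb_fam k q c f)" using g_f by auto
  qed
qed

lemma (in vec_space) span_list_span_fam:
  assumes "set bs \<subseteq> carrier_vec n"
  shows "span (set bs) = span_fam n (length bs) (\<lambda>j. bs ! j)"
proof -
  have dims: "\<forall>w\<in>set bs. dim_vec w = n" using assms by auto
  have "lincomb_list c bs = lincomb_fam n (length bs) c (\<lambda>j. bs ! j)" for c
    unfolding lincomb_list_as_mat_mult[OF dims]
    by (subst mult_mat_vec_eq_lincomb_fam[of _ n]) (use assms in \<open>auto intro!: lincomb_fam_cong col_mat_of_cols\<close>)
  then show ?thesis
    unfolding span_list_as_span[OF assms, symmetric] span_list_def span_fam_def by auto
qed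

lemma orthogonal_lin_indpt:
  fixes S :: "'a::conjugatable_field vec set"
  assumes SC: "S \<subseteq> carrier_vec n"
    and orth: "\<And>u v. u \<in> S \<Longrightarrow> v \<in> S \<Longrightarrow> u \<noteq> v \<Longrightarrow> u \<bullet>c v = 0"
    and nz: "\<And>v. v \<in> S \<Longrightarrow> v \<bullet>c v \<noteq> 0"
  shows "\<not> module.lin_dep class_ring (module_vec TYPE('a) n) S"
proof
  interpret vec_space "TYPE('a)" n .
  assume "lin_dep S"
  then obtain T a v where T: "finite T" "T \<subseteq> S" "lincomb a T = 0\<^sub>v n" "v \<in> T" "a v \<noteq> 0"
    unfolding lin_dep_def by auto
  have TC: "T \<subseteq> carrier_vec n" using T SC by auto
  have vC: "v \<in> carrier_vec n" using T TC by auto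
  have "lincomb a T \<bullet>c v = (\<Sum>i<n. \<Sum>u\<in>T. a u * u $ i * conjugate (v $ i))"
    unfolding scalar_prod_def using vC lincomb_index[OF _ TC]
    by (auto simp: atLeast0LessThan sum_distrib_right intro!: sum.cong)
  also have "\<dots> = (\<Sum>u\<in>T. a u * (u \<bullet>c v))"
    unfolding scalar_prod_def using vC
    by (auto simp: atLeast0LessThan sum_distrib_left mult.assoc sum.swap[of _ "{..<n}"] intro!: sum.cong)
  also have "\<dots> = a v * (v \<bullet>c v) + (\<Sum>u\<in>T - {v}. a u * (u \<bullet>c v))"
    by (rule sum.remove[OF T(1,4)])
  also have "(\<Sum>u\<in>T - {v}. a u * (u \<bullet>c v)) = 0"
  proof (rule sum.neutral, rule ballI)
    fix u assume "u \<in> T - {v}"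
    then show "a u * (u \<bullet>c v) = 0" using T(2,4) orth by auto
  qed
  finally have "a v * (v \<bullet>c v) = 0" using T(3) vC by simp
  then show False using T(2,4,5) nz[of v] by auto
qed

lemma (in vec_space) lin_indpt_card_rank_span:
  assumes A: "A \<in> carrier_mat n m" and S: "S \<subseteq> col_space A" "finite S" "lin_indpt S"
    and card: "card S = rank A"
  shows "span S = col_space A"
proof -
  have colsC: "set (cols A) \<subseteq> carrier_vec n" using A by (auto simp: cols_def)
  let ?W = "col_space A"
  have subW: "submodule class_ring ?W V"
    unfolding col_space_def by (rule span_is_submodule[OF colsC])
  have vsW: "vectorspace class_ring (vs ?W)"
    unfolding col_space_def using subspace_is_vs[OF span_is_subspace[OF colsC]] .
  have "vectorspace.basis class_ring (vs ?W) S"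
  proof (rule vectorspace.dim_li_is_basis[OF vsW])
    show "vectorspace.fin_dim class_ring (vs ?W)" unfolding col_space_def by (rule fin_dim_span_cols[OF A])
    show "\<not> LinearCombinations.module.lin_dep class_ring (vs ?W) S"
      using span_li_not_depend(2)[OF S(1) subW] S(3) by simp
    show "vectorspace.dim class_ring (vs ?W) \<le> card S" using card unfolding rank_def col_space_def by simp
  qed (use S in simp_all)
  then have "LinearCombinations.module.span class_ring (vs ?W) S = ?W"
    unfolding vectorspace.basis_def[OF vsW] by simp
  then show ?thesis using span_li_not_depend(1)[OF S(1) subW] by simp
qed

lemma mat_range_eq_span_fam_orthogonal:
  fixes A :: "'a::conjugatable_field mat"
  assumes A: "A \<in> carrier_mat k m" and l: "l = vec_space.rank k A"
    and b: "\<And>j. j < l \<Longrightarrow> b j \<in> mat_range A"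
    and orth: "\<And>i j. i < l \<Longrightarrow> j < l \<Longrightarrow> i \<noteq> j \<Longrightarrow> b i \<bullet>c b j = 0"
    and nz: "\<And>j. j < l \<Longrightarrow> b j \<bullet>c b j \<noteq> 0"
  shows "mat_range A = span_fam k l b"
proof -
  interpret vec_space "TYPE('a)" k .
  have range_eq: "mat_range A = col_space A"
    unfolding col_space_eq[OF A] mat_range_def using A by auto
  define bs where "bs = map b [0..<l]"
  have bsC: "set bs \<subseteq> carrier_vec k"
    unfolding bs_def using b mat_range_carrier[OF A] by auto
  have inj: "inj_on b {..<l}"
    using orth nz by (intro inj_onI) fastforce
  have span_bs: "span (set bs) = col_space A"
  proof (rule lin_indpt_card_rank_span[OF A])
    show "lin_indpt (set bs)"
      using bsC orth nz unfolding bs_def by (intro orthogonal_lin_indpt) (auto, metis)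
    show "card (set bs) = rank A"
      using card_image[OF inj] unfolding bs_def l by (simp add: atLeast0LessThan)
    show "set bs \<subseteq> col_space A" using b range_eq by (auto simp: bs_def)
  qed simp
  have "mat_range A = span (set bs)" by (simp only: range_eq span_bs)
  also have "\<dots> = span_fam k l (\<lambda>j. bs ! j)"
    using span_list_span_fam[OF bsC] by (simp add: bs_def)
  also have "\<dots> = span_fam k l b" by (rule span_fam_cong) (simp add: bs_def)
  finally show ?thesis .
qed

lemma (in vec_space) subspace_finite_basis:
  assumes sub: "VectorSpace.subspace class_ring W V"
  shows "\<exists>B. finite B \<and> B \<subseteq> W \<and> lin_indpt B \<and> span B = W"
proof -
  have subm: "submodule class_ring W V" using is_module[OF sub] .
  have WC: "W \<subseteq> carrier_vec n" using submodule.subset[OF subm] by simp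
  let ?P = "\<lambda>T. T \<subseteq> W \<and> lin_indpt T"
  have bound: "finite T \<and> card T \<le> n" if "?P T" for T
    using li_le_dim[OF fin_dim, of T] that WC dim_is_n by auto
  have "?P {}" unfolding lin_dep_def by auto
  then obtain B where "finite B" and maxB: "maximal B ?P"
    using maximal_exists[of ?P n "{}", OF bound] by blast
  have BW: "B \<subseteq> W" and liB: "lin_indpt B" using maxB unfolding maximal_def by auto
  have BC: "B \<subseteq> carrier_vec n" using BW WC by auto
  have "W \<subseteq> span B"
  proof
    fix v assume v: "v \<in> W"
    show "v \<in> span B"
    proof (rule ccontr)
      assume nv: "v \<notin> span B"
      then have vB: "v \<notin> B" using in_own_span[OF BC] by auto
      have "lin_indpt (B \<union> {v})"
        using lin_dep_iff_in_span[OF BC liB _ vB] v WC nv by auto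
      then have "B \<union> {v} = B" using maxB BW v unfolding maximal_def by blast
      then show False using vB by auto
    qed
  qed
  then have "span B = W" using span_is_subset[OF BW subm] by blast
  with \<open>finite B\<close> BW liB show ?thesis by blast
qed

lemma subspace_span_fam:
  fixes W :: "'a::field vec set"
  assumes "is_subspace n W"
  shows "\<exists>f. (\<forall>j<subspace_dim n W. f j \<in> carrier_vec n) \<and> W = span_fam n (subspace_dim n W) f"
proof -
  interpret vec_space "TYPE('a)" n .
  have sub: "VectorSpace.subspace class_ring W V" using assms unfolding is_subspace_def by simp
  have subm: "submodule class_ring W V" using is_module[OF sub] .
  obtain B where fB: "finite B" and BW: "B \<subseteq> W" and liB: "lin_indpt B" and spanB: "span B = W"
    using subspace_finite_basis[OF sub] by blast
  have BC: "B \<subseteq> carrier_vec n" using BW submodule.subset[OF subm] by auto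
  have vsW: "vectorspace class_ring (vs W)" using subspace_is_vs[OF sub] .
  have "vectorspace.basis class_ring (vs W) B"
    unfolding vectorspace.basis_def[OF vsW]
    using span_li_not_depend[OF BW subm] spanB liB BW by simp
  then have dimB: "subspace_dim n W = card B"
    unfolding subspace_dim_def using vectorspace.dim_basis[OF vsW fB] by simp
  obtain bs where bs: "set bs = B" "distinct bs" using finite_distinct_list[OF fB] by blast
  have "W = span_fam n (length bs) (\<lambda>j. bs ! j)"
    using span_list_span_fam[of bs] bs(1) BC spanB by simp
  moreover have "length bs = subspace_dim n W" using dimB distinct_card[OF bs(2)] bs(1) by simp
  ultimately show ?thesis using bs(1) BC by (intro exI[of _ "\<lambda>j. bs ! j"]) auto
qed

lemma sum_mult_indicator_lessThan:
  fixes g :: "nat \<Rightarrow> real"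
  assumes "r \<le> l"
  shows "(\<Sum>j<l. g j * (if j < r then 1 else 0)) = (\<Sum>j<r. g j)"
proof -
  have "(\<Sum>j<l. g j * (if j < r then 1 else 0)) = (\<Sum>j<r. g j * (if j < r then 1 else 0))"
    using assms by (intro sum.mono_neutral_right) auto
  then show ?thesis by simp
qed

lemma weighted_sum_le_leading_sum:
  fixes lam c :: "nat \<Rightarrow> real"
  assumes sorted: "\<And>i j. i \<le> j \<Longrightarrow> j < l \<Longrightarrow> lam j \<le> lam i"
    and lam_nonneg: "\<And>j. j < l \<Longrightarrow> 0 \<le> lam j"
    and c_bounds: "\<And>j. j < l \<Longrightarrow> 0 \<le> c j \<and> c j \<le> 1"
    and c_sum: "(\<Sum>j<l. c j) \<le> real r" and r: "r \<le> l"
  shows "(\<Sum>j<l. lam j * c j) \<le> (\<Sum>j<r. lam j)"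
proof -
  \<comment> \<open>With the threshold \<open>\<mu> = lam r\<close>, every term \<open>(lam j - \<mu>) * (c j - [j < r])\<close> is \<open>\<le> 0\<close>.\<close>
  define \<mu> where "\<mu> = (if r < l then lam r else 0)"
  define \<delta> :: "nat \<Rightarrow> real" where "\<delta> j = (if j < r then 1 else 0)" for j
  have leading: "(\<Sum>j<l. g j * \<delta> j) = (\<Sum>j<r. g j)" for g
    unfolding \<delta>_def by (rule sum_mult_indicator_lessThan[OF r])
  have "(\<Sum>j<l. lam j * c j) - (\<Sum>j<r. lam j)
      = (\<Sum>j<l. (lam j - \<mu>) * (c j - \<delta> j)) + \<mu> * ((\<Sum>j<l. c j) - r)"
    using leading[of lam] leading[of "\<lambda>_. 1"] sum_distrib_left[of \<mu> \<delta> "{..<l}"]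
    by (simp add: algebra_simps sum_subtractf sum.distrib sum_distrib_left)
  also have "\<dots> \<le> 0"
  proof (rule add_nonpos_nonpos)
    show "(\<Sum>j<l. (lam j - \<mu>) * (c j - \<delta> j)) \<le> 0"
    proof (rule sum_nonpos)
      fix j assume "j \<in> {..<l}"
      then show "(lam j - \<mu>) * (c j - \<delta> j) \<le> 0"
        using sorted[of j r] sorted[of r j] lam_nonneg[of j] c_bounds[of j]
        by (cases "j < r") (auto simp: \<mu>_def \<delta>_def mult_nonneg_nonpos mult_nonpos_nonneg)
    qed
    show "\<mu> * ((\<Sum>j<l. c j) - r) \<le> 0"
      using c_sum lam_nonneg by (auto simp: \<mu>_def mult_nonneg_nonpos)
  qed
  finally show ?thesis by simp
qed

lemma is_subspace_carrier:
  fixes V :: "'a::field vec set"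
  assumes "is_subspace n V"
  shows "V \<subseteq> carrier_vec n"
proof -
  interpret vec_space "TYPE('a)" n .
  show ?thesis using submodule.subset[OF is_module] assms unfolding is_subspace_def by simp
qed

section \<open>Orthogonal projection over the real or complex numbers\<close>

context
  assumes mult_conjugate_norm:
    "\<And>x::'a::{conjugatable_field, real_normed_field}. x * conjugate x = of_real ((norm x)\<^sup>2)"
begin

lemma conjugate_of_real: "conjugate (of_real r :: 'a) = of_real r"
proof -
  have nonneg: "conjugate (of_real s :: 'a) = of_real s" if "s \<ge> 0" for s
  proof -
    define x :: 'a where "x = of_real (sqrt s)"
    have xx: "x * conjugate x = of_real s" using mult_conjugate_norm[of x] that by (simp add: x_def)
    then have "conjugate (of_real s) = conjugate (x * conjugate x)" by simp
    also have "\<dots> = conjugate x * x" by (simp add: conjugate_dist_mul)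
    finally show ?thesis using xx by (simp add: mult.commute)
  qed
  show ?thesis
  proof (cases "r \<ge> 0")
    case False
    then have "of_real r = - (of_real (-r) :: 'a)" by simp
    then show ?thesis using nonneg[of "-r"] False by (simp add: conjugate_neg)
  qed (rule nonneg)
qed

lemma norm_conjugate: "norm (conjugate x) = norm (x::'a)"
proof -
  have "of_real ((norm (conjugate x))\<^sup>2) = (of_real ((norm x)\<^sup>2) :: 'a)"
    using mult_conjugate_norm[of "conjugate x"] mult_conjugate_norm[of x] by (simp add: mult.commute)
  then show ?thesis by (metis of_real_eq_iff norm_ge_zero power2_eq_imp_eq)
qed

lemma cscalar_prod_self: "x \<bullet>c x = of_real (sq_vnorm (x :: 'a vec))"
  unfolding scalar_prod_def sq_vnorm_def
  by (auto simp: atLeast0LessThan mult_conjugate_norm intro!: sum.cong)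

lemma sq_vnorm_eq_0_iff:
  assumes "x \<in> carrier_vec k"
  shows "sq_vnorm (x :: 'a vec) = 0 \<longleftrightarrow> x = 0\<^sub>v k"
proof
  assume "sq_vnorm x = 0"
  then have "\<forall>i\<in>{..<dim_vec x}. (norm (x $ i))\<^sup>2 = 0"
    unfolding sq_vnorm_def by (subst sum_nonneg_eq_0_iff[symmetric]) auto
  then show "x = 0\<^sub>v k" using assms by (intro eq_vecI) auto
qed (simp add: sq_vnorm_def)

lemma sq_vnorm_orthonormal_fam: "orthonormal_fam k p e \<Longrightarrow> j < p \<Longrightarrow> sq_vnorm (e j :: 'a vec) = 1"
  using cscalar_prod_self[of "e j"] orthonormal_fam_cscalar_prod[of k p e j j] by simp

lemma sq_vnorm_lincomb_orthonormal:
  assumes "orthonormal_fam k p e"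
  shows "sq_vnorm (lincomb_fam k p c e :: 'a vec) = (\<Sum>j<p. (norm (c j))\<^sup>2)"
proof -
  have "(of_real (sq_vnorm (lincomb_fam k p c e)) :: 'a) = (\<Sum>j<p. c j * (e j \<bullet>c lincomb_fam k p c e))"
    by (simp add: cscalar_prod_self[symmetric] cscalar_prod_lincomb_fam_left)
  also have "\<dots> = (\<Sum>j<p. c j * conjugate (c j))"
    by (rule sum.cong, simp, metis lincomb_fam_cscalar_prod_orthonormal orthonormal_fam_carrier
        assms cscalar_prod_swap lincomb_fam_carrier lessThan_iff)
  also have "\<dots> = of_real (\<Sum>j<p. (norm (c j))\<^sup>2)" by (simp add: mult_conjugate_norm)
  finally show ?thesis using of_real_eq_iff by blast
qed

lemma sq_vnorm_add_orthogonal: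
  assumes "x \<in> carrier_vec k" "y \<in> carrier_vec k" "x \<bullet>c y = (0::'a)"
  shows "sq_vnorm (x + y) = sq_vnorm x + sq_vnorm y"
proof -
  have "y \<bullet>c x = 0" using cscalar_prod_swap[OF assms(1,2)] assms(3) by simp
  then have "(x + y) \<bullet>c (x + y) = x \<bullet>c x + y \<bullet>c y"
    using assms by (simp add: conjugate_add_vec add_scalar_prod_distrib scalar_prod_add_distrib[of _ k])
  then show ?thesis by (simp add: cscalar_prod_self flip: of_real_add)
qed

lemma sq_vnorm_diff_orth_proj:
  assumes on: "orthonormal_fam k p e" and y: "y \<in> carrier_vec k" and z: "z \<in> span_fam k p e"
  shows "sq_vnorm (y - z) = sq_vnorm y - (\<Sum>j<p. (norm (y \<bullet>c e j))\<^sup>2) + sq_vnorm (orth_proj k p e y - z :: 'a vec)"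
proof -
  obtain d where z_eq: "z = lincomb_fam k p d e" using z unfolding span_fam_def by auto
  define P where "P = orth_proj k p e y"
  define res where "res = y - P"
  have P: "P \<in> carrier_vec k" unfolding P_def orth_proj_def by simp
  have res: "res \<in> carrier_vec k" unfolding res_def using y P by simp
  have "res \<bullet>c e j = 0" if "j < p" for j
    using orth_proj_residual_orthogonal[OF on y that] unfolding res_def P_def .
  then have res_orth: "res \<bullet>c lincomb_fam k p c e = 0" for c
    by (simp add: cscalar_prod_lincomb_fam_right[OF res orthonormal_fam_carrier[OF on]])
  have P_z: "P - z = lincomb_fam k p (\<lambda>j. y \<bullet>c e j - d j) e"
    unfolding P_def orth_proj_def z_eq by (rule eq_vecI) (auto simp: sum_subtractf algebra_simps)
  have zC: "z \<in> carrier_vec k" using z span_fam_carrier by blast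
  have "y - z = res + (P - z)"
    unfolding res_def by (rule eq_vecI) (use y P zC in auto)
  moreover have "sq_vnorm (res + (P - z)) = sq_vnorm res + sq_vnorm (P - z)"
    using sq_vnorm_add_orthogonal[OF res] res_orth P_z P zC by simp
  moreover have "y = res + P"
    unfolding res_def by (rule eq_vecI) (use y P in auto)
  moreover have "sq_vnorm (res + P) = sq_vnorm res + sq_vnorm P"
    using sq_vnorm_add_orthogonal[OF res P] res_orth unfolding P_def orth_proj_def by simp
  moreover have "sq_vnorm P = (\<Sum>j<p. (norm (y \<bullet>c e j))\<^sup>2)"
    unfolding P_def orth_proj_def by (rule sq_vnorm_lincomb_orthonormal[OF on])
  ultimately show ?thesis unfolding P_def by (metis add_diff_cancel_left' diff_add_cancel)
qed

lemma bessel_inequality: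
  assumes "orthonormal_fam k p e" "y \<in> carrier_vec k"
  shows "(\<Sum>j<p. (norm (y \<bullet>c e j))\<^sup>2) \<le> sq_vnorm (y :: 'a vec)"
proof -
  let ?P = "orth_proj k p e y"
  have "?P - ?P = 0\<^sub>v k" by (simp add: orth_proj_def)
  then show ?thesis
    using sq_vnorm_diff_orth_proj[OF assms orth_proj_in_span_fam] sq_vnorm_nonneg[of "y - ?P"]
    by (simp add: sq_vnorm_def)
qed

lemma parseval:
  assumes on: "orthonormal_fam k p e" and y: "y \<in> span_fam k p e"
  shows "sq_vnorm (y :: 'a vec) = (\<Sum>j<p. (norm (y \<bullet>c e j))\<^sup>2)" and "y = orth_proj k p e y"
proof -
  have yC: "y \<in> carrier_vec k" using y span_fam_carrier by blast
  have "0 = sq_vnorm y - (\<Sum>j<p. (norm (y \<bullet>c e j))\<^sup>2) + sq_vnorm (orth_proj k p e y - y)"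
    using sq_vnorm_diff_orth_proj[OF on yC y] yC by (simp add: sq_vnorm_def)
  note decomposition = this bessel_inequality[OF on yC] sq_vnorm_nonneg[of "orth_proj k p e y - y"]
  then show "sq_vnorm y = (\<Sum>j<p. (norm (y \<bullet>c e j))\<^sup>2)" by linarith
  from decomposition have "sq_vnorm (orth_proj k p e y - y) = 0" by linarith
  then have "orth_proj k p e y - y = 0\<^sub>v k"
    using sq_vnorm_eq_0_iff[of "orth_proj k p e y - y" k] yC by (simp add: orth_proj_def)
  then have "\<And>i. i < k \<Longrightarrow> (orth_proj k p e y - y) $ i = 0" by simp
  then show "y = orth_proj k p e y" using yC by (intro eq_vecI) (auto simp: orth_proj_def)
qed

lemma orthonormal_fam_extend_residual:
  assumes on: "orthonormal_fam k p e" and v: "v \<in> carrier_vec k" and ne: "v \<noteq> orth_proj k p e v"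
  shows "\<exists>z s. orthonormal_fam k (Suc p) (e(p := z)) \<and> z \<in> carrier_vec k \<and> s \<noteq> (0::'a) \<and>
           v = orth_proj k p e v + s \<cdot>\<^sub>v z"
proof -
  define P where "P = orth_proj k p e v"
  define y where "y = v - P"
  have P: "P \<in> carrier_vec k" unfolding P_def orth_proj_def by simp
  have y: "y \<in> carrier_vec k" unfolding y_def using v P by simp
  have vPy: "v = P + y" unfolding y_def by (intro eq_vecI) (use v P in auto)
  then have "y \<noteq> 0\<^sub>v k" using ne P unfolding P_def by auto
  define s where "s = sqrt (sq_vnorm y)"
  have "s > 0"
    using \<open>y \<noteq> 0\<^sub>v k\<close> sq_vnorm_eq_0_iff[OF y] sq_vnorm_nonneg[of y] unfolding s_def by auto
  define z where "z = (of_real (1 / s) :: 'a) \<cdot>\<^sub>v y"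
  have z: "z \<in> carrier_vec k" unfolding z_def using y by simp
  have "sq_vnorm z = (1 / s)\<^sup>2 * sq_vnorm y"
    unfolding z_def sq_vnorm_def using \<open>s > 0\<close> by (simp add: sum_distrib_left norm_divide power_divide)
  also have "\<dots> = 1" using \<open>s > 0\<close> unfolding s_def by (simp add: power_divide)
  finally have "z \<bullet>c z = 1" by (simp add: cscalar_prod_self)
  moreover have "z \<bullet>c e j = 0" if "j < p" for j
    using orth_proj_residual_orthogonal[OF on v that] y orthonormal_fam_carrier[OF on that]
    unfolding z_def y_def P_def by (simp add: smult_scalar_prod_distrib[of _ k])
  ultimately have "orthonormal_fam k (Suc p) (e(p := z))"
    by (rule orthonormal_fam_extend[OF on z])
  moreover have "v = P + of_real s \<cdot>\<^sub>v z"
    unfolding vPy z_def using \<open>s > 0\<close> by (simp add: smult_smult_assoc flip: of_real_mult)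
  ultimately show ?thesis using z \<open>s > 0\<close> unfolding P_def by (intro exI conjI) auto
qed

lemma gram_schmidt_span_fam:
  assumes "\<And>j. j < q \<Longrightarrow> (f j :: 'a vec) \<in> carrier_vec k"
  shows "\<exists>p e. p \<le> q \<and> orthonormal_fam k p e \<and> span_fam k q f = span_fam k p e"
  using assms
proof (induction q)
  case 0
  have "orthonormal_fam k 0 f" unfolding orthonormal_fam_def by simp
  then show ?case by blast
next
  case (Suc q)
  then obtain p e where p: "p \<le> q" and on: "orthonormal_fam k p e"
    and span_eq: "span_fam k q f = span_fam k p e" by auto
  have v: "f q \<in> carrier_vec k" using Suc.prems by simp
  have span_Suc: "span_fam k (Suc q) f = {x + a \<cdot>\<^sub>v f q | x a. x \<in> span_fam k p e}"
    using span_fam_Suc[of f q k, OF v] span_eq by simp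
  show ?case
  proof (cases "f q = orth_proj k p e (f q)")
    case True
    then have "f q \<in> span_fam k p e" by (metis orth_proj_in_span_fam)
    moreover have "x = x + 0 \<cdot>\<^sub>v f q" if "x \<in> span_fam k p e" for x
      using span_fam_carrier[OF that] v by (intro eq_vecI) auto
    ultimately have "span_fam k (Suc q) f = span_fam k p e"
      unfolding span_Suc using span_fam_add_smult by blast
    then show ?thesis using p on by (intro exI[of _ p] exI[of _ e]) auto
  next
    case False
    then obtain z s where on': "orthonormal_fam k (Suc p) (e(p := z))" and z: "z \<in> carrier_vec k"
      and "s \<noteq> 0" and fq: "f q = orth_proj k p e (f q) + s \<cdot>\<^sub>v z"
      using orthonormal_fam_extend_residual[OF on v] by blast
    have "span_fam k (Suc p) (e(p := z)) = {x + a \<cdot>\<^sub>v z | x a. x \<in> span_fam k p e}"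
      using span_fam_Suc[of "e(p := z)" p k] span_fam_cong[of p "e(p := z)" e] z by simp
    also have "\<dots> = span_fam k (Suc q) f"
      unfolding span_Suc by (rule span_fam_Suc_exchange[OF fq orth_proj_in_span_fam \<open>s \<noteq> 0\<close> z])
    finally show ?thesis using p on' by (metis Suc_le_mono)
  qed
qed

lemma theta_proj_residual:
  fixes \<Theta> :: "'a mat"
  assumes \<Theta>: "\<Theta> \<in> carrier_mat k n" and V: "V \<subseteq> carrier_vec n"
    and image: "(\<lambda>v. \<Theta> *\<^sub>v v) ` V = span_fam k p e" and on: "orthonormal_fam k p e"
    and x: "x \<in> carrier_vec n"
  shows "(vnorm (\<Theta> *\<^sub>v (x - theta_proj \<Theta> V x)))\<^sup>2
           = sq_vnorm (\<Theta> *\<^sub>v x) - (\<Sum>j<p. (norm ((\<Theta> *\<^sub>v x) \<bullet>c e j))\<^sup>2)"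
proof -
  define y where "y = \<Theta> *\<^sub>v x"
  have y: "y \<in> carrier_vec k" unfolding y_def using \<Theta> x by simp
  define S where "S = (\<Sum>j<p. (norm (y \<bullet>c e j))\<^sup>2)"
  have residual: "sq_vnorm (\<Theta> *\<^sub>v (x - w)) = sq_vnorm y - S + sq_vnorm (orth_proj k p e y - \<Theta> *\<^sub>v w)"
    if "w \<in> V" for w
  proof -
    have "\<Theta> *\<^sub>v (x - w) = y - \<Theta> *\<^sub>v w"
      unfolding y_def using that V by (intro mult_minus_distrib_mat_vec[OF \<Theta> x]) auto
    moreover have "\<Theta> *\<^sub>v w \<in> span_fam k p e" using image that by blast
    ultimately show ?thesis using sq_vnorm_diff_orth_proj[OF on y] unfolding S_def by simp
  qed
  have lower: "sq_vnorm y - S \<le> sq_vnorm (\<Theta> *\<^sub>v (x - w))" if "w \<in> V" for w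
    using residual[OF that] sq_vnorm_nonneg[of "orth_proj k p e y - \<Theta> *\<^sub>v w"] by linarith
  \<comment> \<open>The minimiser exists, so the choice in \<open>theta_proj\<close> is not a junk value.\<close>
  obtain w0 where w0: "w0 \<in> V" "\<Theta> *\<^sub>v w0 = orth_proj k p e y"
    using image orth_proj_in_span_fam by (metis imageE)
  have attained: "sq_vnorm (\<Theta> *\<^sub>v (x - w0)) = sq_vnorm y - S"
    using residual[OF w0(1)] w0(2) by (simp add: sq_vnorm_def orth_proj_def)
  have "theta_proj \<Theta> V x \<in> V \<and>
      (\<forall>w'\<in>V. vnorm (\<Theta> *\<^sub>v (x - theta_proj \<Theta> V x)) \<le> vnorm (\<Theta> *\<^sub>v (x - w')))"
    unfolding theta_proj_def
    by (rule someI[of _ w0]) (use w0 lower attained in \<open>simp add: vnorm_le_iff\<close>)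
  then have "theta_proj \<Theta> V x \<in> V"
    and "sq_vnorm (\<Theta> *\<^sub>v (x - theta_proj \<Theta> V x)) \<le> sq_vnorm (\<Theta> *\<^sub>v (x - w0))"
    using w0(1) by (auto simp: vnorm_le_iff)
  then have "sq_vnorm (\<Theta> *\<^sub>v (x - theta_proj \<Theta> V x)) = sq_vnorm y - S"
    using attained lower by fastforce
  then show ?thesis unfolding vnorm_square S_def y_def .
qed

lemma delta_pod_eq:
  fixes \<Theta> :: "'a mat"
  assumes \<Theta>: "\<Theta> \<in> carrier_mat k n" and U: "U \<in> carrier_mat n m" and V: "V \<subseteq> carrier_vec n"
    and image: "(\<lambda>v. \<Theta> *\<^sub>v v) ` V = span_fam k p w" and on: "orthonormal_fam k p w"
  shows "delta_pod \<Theta> U V = (1 / real m) * ((\<Sum>i<m. sq_vnorm (col (\<Theta> * U) i))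
           - (\<Sum>i<m. \<Sum>j<p. (norm (col (\<Theta> * U) i \<bullet>c w j))\<^sup>2))"
proof -
  have "(vnorm (\<Theta> *\<^sub>v (col U i - theta_proj \<Theta> V (col U i))))\<^sup>2
      = sq_vnorm (col (\<Theta> * U) i) - (\<Sum>j<p. (norm (col (\<Theta> * U) i \<bullet>c w j))\<^sup>2)" if "i < m" for i
    using theta_proj_residual[OF \<Theta> V image on, of "col U i"] col_mult2[OF \<Theta> U that] U
    by (simp add: carrier_vecI)
  then show ?thesis unfolding delta_pod_def using U by (simp add: sum_subtractf)
qed

lemma subspace_image_orthonormal:
  assumes "is_subspace n V" "\<Theta> \<in> carrier_mat k n"
  shows "\<exists>p w. p \<le> subspace_dim n V \<and> orthonormal_fam k p w \<and>
           (\<lambda>v. \<Theta> *\<^sub>v v) ` V = span_fam k p (w :: nat \<Rightarrow> 'a vec)"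
proof -
  define d where "d = subspace_dim n V"
  obtain f where f: "\<forall>j<d. f j \<in> carrier_vec n" and V: "V = span_fam n d f"
    using subspace_span_fam[OF assms(1)] unfolding d_def by blast
  have "\<Theta> *\<^sub>v f j \<in> carrier_vec k" for j using assms(2) by (auto intro: carrier_vecI)
  then obtain p w where "p \<le> d" "orthonormal_fam k p w"
    "span_fam k d (\<lambda>j. \<Theta> *\<^sub>v f j) = span_fam k p w"
    using gram_schmidt_span_fam[of d "\<lambda>j. \<Theta> *\<^sub>v f j" k] by blast
  moreover have "(\<lambda>v. \<Theta> *\<^sub>v v) ` V = span_fam k d (\<lambda>j. \<Theta> *\<^sub>v f j)"
    unfolding V using f by (intro image_span_fam[OF assms(2)]) auto
  ultimately show ?thesis unfolding d_def by auto
qed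

end

section \<open>Singular vectors of the sketched snapshot matrix\<close>

lemma mat_adjoint_carrier: "A \<in> carrier_mat k m \<Longrightarrow> mat_adjoint A \<in> carrier_mat m k"
  unfolding mat_adjoint_def by auto

lemma mat_adjoint_mult_vec_index:
  assumes A: "A \<in> carrier_mat k m" and y: "y \<in> carrier_vec k" and i: "i < m"
  shows "(mat_adjoint A *\<^sub>v y) $ i = y \<bullet>c col A i"
proof -
  have "row (mat_adjoint A) i = conjugate (col A i)"
    unfolding mat_adjoint_def using A i by (subst mat_of_rows_row) auto
  then have "(mat_adjoint A *\<^sub>v y) $ i = conjugate (col A i) \<bullet> y"
    using A i by (simp add: mat_adjoint_def)
  also have "\<dots> = y \<bullet>c col A i" using A y by (subst comm_scalar_prod[of _ k]) auto
  finally show ?thesis .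
qed

lemma sum_sq_cscalar_prod_orthonormal:
  fixes e :: "nat \<Rightarrow> 'a::{conjugatable_field, real_normed_field} vec"
  assumes "orthonormal_fam k p e" "j < p" "r \<le> p"
  shows "(\<Sum>i<r. (norm (e j \<bullet>c e i))\<^sup>2) = (if j < r then 1 else 0)"
proof -
  have "(\<Sum>i<r. (norm (e j \<bullet>c e i))\<^sup>2) = (\<Sum>i<r. if j = i then 1 else 0)"
    using assms by (intro sum.cong) (auto simp: orthonormal_fam_cscalar_prod)
  then show ?thesis by simp
qed

locale pod_eigen =
  fixes A :: "'a::{conjugatable_field, real_normed_field} mat"
    and k m l :: nat and lam :: "nat \<Rightarrow> real" and t :: "nat \<Rightarrow> 'a vec"
  assumes mult_conjugate_norm: "\<And>x::'a. x * conjugate x = of_real ((norm x)\<^sup>2)"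
    and A: "A \<in> carrier_mat k m"
    and rank: "l = vec_space.rank k A"
    and eigenpair: "\<And>j. j < l \<Longrightarrow> eigenvector (mat_adjoint A * A) (t j) (of_real (lam j)) \<and> lam j \<noteq> 0"
    and orthonormal: "\<And>i j. i < l \<Longrightarrow> j < l \<Longrightarrow> t i \<bullet>c t j = (if i = j then 1 else 0)"
begin

definition left_sing_vec :: "nat \<Rightarrow> 'a vec" where
  "left_sing_vec j = (of_real (1 / sqrt (lam j)) :: 'a) \<cdot>\<^sub>v (A *\<^sub>v t j)"

lemma t_carrier: "j < l \<Longrightarrow> t j \<in> carrier_vec m"
  using eigenpair A mat_adjoint_carrier[OF A] unfolding eigenvector_def by auto

lemma orthonormal_fam_t: "orthonormal_fam m l t"
  unfolding orthonormal_fam_def using t_carrier orthonormal by auto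

lemma image_cscalar_prod_col:
  assumes "i < m" "j < l"
  shows "(A *\<^sub>v t j) \<bullet>c col A i = of_real (lam j) * t j $ i"
proof -
  have "(A *\<^sub>v t j) \<bullet>c col A i = (mat_adjoint A *\<^sub>v (A *\<^sub>v t j)) $ i"
    using A assms(1) by (intro mat_adjoint_mult_vec_index[symmetric]) (auto intro: carrier_vecI)
  also have "\<dots> = (mat_adjoint A * A *\<^sub>v t j) $ i"
    using mat_adjoint_carrier[OF A] A t_carrier[OF assms(2)] by simp
  also have "\<dots> = of_real (lam j) * t j $ i"
    using eigenpair[OF assms(2)] t_carrier[OF assms(2)] assms(1) unfolding eigenvector_def by simp
  finally show ?thesis .
qed

lemma image_cscalar_prod_image:
  assumes "i < l" "j < l"
  shows "(A *\<^sub>v t i) \<bullet>c (A *\<^sub>v t j) = (if i = j then of_real (lam i) else 0)"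
proof -
  have "A *\<^sub>v t j = lincomb_fam k m (\<lambda>r. t j $ r) (col A)"
    using mult_mat_vec_eq_lincomb_fam[OF A, of "\<lambda>r. t j $ r"] t_carrier[OF assms(2)]
    by (metis carrier_vecD eq_vecI index_vec dim_vec)
  then have "(A *\<^sub>v t i) \<bullet>c (A *\<^sub>v t j) = (\<Sum>r<m. conjugate (t j $ r) * ((A *\<^sub>v t i) \<bullet>c col A r))"
    using A by (simp add: cscalar_prod_lincomb_fam_right[of _ k] carrier_vecI)
  also have "\<dots> = of_real (lam i) * (\<Sum>r<m. t i $ r * conjugate (t j $ r))"
    using assms by (simp add: image_cscalar_prod_col sum_distrib_left mult_ac)
  also have "(\<Sum>r<m. t i $ r * conjugate (t j $ r)) = t i \<bullet>c t j"
    using t_carrier[OF assms(2)] by (simp add: scalar_prod_def atLeast0LessThan)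
  finally show ?thesis using orthonormal[OF assms] by simp
qed

lemma lam_pos:
  assumes "j < l"
  shows "lam j > 0"
proof -
  have "(of_real (sq_vnorm (A *\<^sub>v t j)) :: 'a) = of_real (lam j)"
    using image_cscalar_prod_image[OF assms assms] cscalar_prod_self[OF mult_conjugate_norm, of "A *\<^sub>v t j"]
    by simp
  then have "lam j = sq_vnorm (A *\<^sub>v t j)" by (simp only: of_real_eq_iff)
  then show ?thesis using sq_vnorm_nonneg[of "A *\<^sub>v t j"] eigenpair[OF assms] by simp
qed

lemma orthonormal_left_sing_vecs: "orthonormal_fam k l left_sing_vec"
proof -
  have "left_sing_vec i \<bullet>c left_sing_vec j = (if i = j then 1 else 0)" if "i < l" "j < l" for i j
  proof -
    have "left_sing_vec i \<bullet>c left_sing_vec j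
        = of_real (1 / sqrt (lam i)) * of_real (1 / sqrt (lam j)) * ((A *\<^sub>v t i) \<bullet>c (A *\<^sub>v t j))"
      unfolding left_sing_vec_def using A
      by (simp only: cscalar_prod_smult_smult[of _ k] mult_mat_vec_carrier t_carrier that
          conjugate_of_real[OF mult_conjugate_norm])
    also have "\<dots> = (if i = j then 1 else 0)"
    proof (cases "i = j")
      case True
      have "1 / sqrt (lam i) * (1 / sqrt (lam i)) * lam i = 1"
        using lam_pos[OF that(1)] by (simp add: divide_simps)
      then have "(of_real (1 / sqrt (lam i)) :: 'a) * of_real (1 / sqrt (lam i)) * of_real (lam i) = 1"
        by (metis of_real_1 of_real_mult)
      then show ?thesis using True that by (simp only: image_cscalar_prod_image refl if_True)
    qed (use that in \<open>simp add: image_cscalar_prod_image\<close>)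
    finally show ?thesis .
  qed
  then show ?thesis
    unfolding orthonormal_fam_def left_sing_vec_def using A by (auto intro: carrier_vecI)
qed

lemma image_eq_smult_left_sing_vec: "j < l \<Longrightarrow> A *\<^sub>v t j = (of_real (sqrt (lam j)) :: 'a) \<cdot>\<^sub>v left_sing_vec j"
  unfolding left_sing_vec_def using lam_pos[of j]
  by (simp add: smult_smult_assoc flip: of_real_mult)

lemma col_cscalar_prod_left_sing_vec:
  assumes "i < m" "j < l"
  shows "col A i \<bullet>c left_sing_vec j = of_real (sqrt (lam j)) * conjugate (t j $ i)"
proof -
  have "left_sing_vec j \<bullet>c col A i = of_real (1 / sqrt (lam j)) * ((A *\<^sub>v t j) \<bullet>c col A i)"
    unfolding left_sing_vec_def using A by (subst smult_scalar_prod_distrib[of _ k]) (auto intro: carrier_vecI)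
  also have "\<dots> = of_real (sqrt (lam j)) * t j $ i"
    using lam_pos[OF assms(2)] assms
    by (simp add: image_cscalar_prod_col field_simps real_sqrt_divide flip: of_real_mult)
  finally have "left_sing_vec j \<bullet>c col A i = of_real (sqrt (lam j)) * t j $ i" .
  moreover have "col A i \<bullet>c left_sing_vec j = conjugate (left_sing_vec j \<bullet>c col A i)"
    by (rule cscalar_prod_swap) (use A assms in \<open>auto simp: left_sing_vec_def intro: carrier_vecI\<close>)
  ultimately show ?thesis by (simp add: conjugate_dist_mul conjugate_of_real[OF mult_conjugate_norm])
qed

lemma span_images_eq_span_left_sing_vecs:
  assumes "r \<le> l"
  shows "span_fam k r (\<lambda>j. A *\<^sub>v t j) = span_fam k r left_sing_vec"
proof (rule span_fam_scale)
  fix j assume "j < r"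
  then have j: "j < l" using assms by simp
  show "A *\<^sub>v t j = (of_real (sqrt (lam j)) :: 'a) \<cdot>\<^sub>v left_sing_vec j"
    by (rule image_eq_smult_left_sing_vec[OF j])
  show "(of_real (sqrt (lam j)) :: 'a) \<noteq> 0" using lam_pos[OF j] by simp
  show "left_sing_vec j \<in> carrier_vec k" by (rule orthonormal_fam_carrier[OF orthonormal_left_sing_vecs j])
qed

lemma mat_range_eq_span_left_sing_vecs: "mat_range A = span_fam k l left_sing_vec"
proof -
  have "mat_range A = span_fam k l (\<lambda>j. A *\<^sub>v t j)"
  proof (rule mat_range_eq_span_fam_orthogonal[OF A rank])
    show "A *\<^sub>v t j \<in> mat_range A" if "j < l" for j
      unfolding mat_range_def using A t_carrier[OF that] by auto
    show "(A *\<^sub>v t j) \<bullet>c (A *\<^sub>v t j) \<noteq> 0" if "j < l" for j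
      using image_cscalar_prod_image[OF that that] lam_pos[OF that] by simp
  qed (use image_cscalar_prod_image in simp)
  then show ?thesis using span_images_eq_span_left_sing_vecs by simp
qed

lemma col_in_span_left_sing_vecs:
  assumes "i < m"
  shows "col A i \<in> span_fam k l left_sing_vec"
proof -
  have "col A i \<in> span_fam k m (col A)" using A assms by (intro span_fam_self) auto
  then show ?thesis using mat_range_span_fam[OF A] mat_range_eq_span_left_sing_vecs by simp
qed

lemma column_energy:
  assumes w: "w \<in> carrier_vec k"
  shows "(\<Sum>i<m. (norm (col A i \<bullet>c w))\<^sup>2) = (\<Sum>j<l. lam j * (norm (left_sing_vec j \<bullet>c w))\<^sup>2)"
proof -
  define X where "X j = (of_real (sqrt (lam j)) :: 'a) * (left_sing_vec j \<bullet>c w)" for j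
  define L where "L = lincomb_fam m l (\<lambda>j. conjugate (X j)) t"
  have "col A i \<bullet>c w = conjugate (L $ i)" if i: "i < m" for i
  proof -
    have "col A i = lincomb_fam k l (\<lambda>j. col A i \<bullet>c left_sing_vec j) left_sing_vec"
      using parseval(2)[OF mult_conjugate_norm orthonormal_left_sing_vecs col_in_span_left_sing_vecs[OF i]]
      unfolding orth_proj_def .
    then have "col A i \<bullet>c w = (\<Sum>j<l. (col A i \<bullet>c left_sing_vec j) * (left_sing_vec j \<bullet>c w))"
      by (metis cscalar_prod_lincomb_fam_left[OF w])
    also have "\<dots> = conjugate (\<Sum>j<l. conjugate (X j) * t j $ i)"
      using i by (simp add: col_cscalar_prod_left_sing_vec X_def sum_conjugate conjugate_dist_mul
          conjugate_of_real[OF mult_conjugate_norm] mult_ac)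
    finally show ?thesis unfolding L_def using i by simp
  qed
  then have "(\<Sum>i<m. (norm (col A i \<bullet>c w))\<^sup>2) = sq_vnorm L"
    unfolding sq_vnorm_def L_def by (simp add: norm_conjugate[OF mult_conjugate_norm])
  also have "\<dots> = (\<Sum>j<l. (norm (X j))\<^sup>2)"
    unfolding L_def by (simp add: sq_vnorm_lincomb_orthonormal[OF mult_conjugate_norm orthonormal_fam_t]
        norm_conjugate[OF mult_conjugate_norm])
  also have "\<dots> = (\<Sum>j<l. lam j * (norm (left_sing_vec j \<bullet>c w))\<^sup>2)"
    using less_imp_le[OF lam_pos] by (intro sum.cong refl) (simp add: X_def norm_mult power_mult_distrib)
  finally show ?thesis .
qed

lemma captured_energy:
  assumes "orthonormal_fam k p w"
  shows "(\<Sum>i<m. \<Sum>j<p. (norm (col A i \<bullet>c w j))\<^sup>2)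
           = (\<Sum>j<l. lam j * (\<Sum>i<p. (norm (left_sing_vec j \<bullet>c w i))\<^sup>2))"
  using column_energy[OF orthonormal_fam_carrier[OF assms]]
  by (subst sum.swap) (simp add: sum_distrib_left sum.swap[of _ "{..<p}"])

lemma leading_energy:
  assumes "r \<le> l"
  shows "(\<Sum>i<m. \<Sum>j<r. (norm (col A i \<bullet>c left_sing_vec j))\<^sup>2) = (\<Sum>j<r. lam j)"
proof -
  have "(\<Sum>i<m. \<Sum>j<r. (norm (col A i \<bullet>c left_sing_vec j))\<^sup>2) = (\<Sum>j<l. lam j * (if j < r then 1 else 0))"
    using captured_energy[OF orthonormal_fam_mono[OF orthonormal_left_sing_vecs assms]] assms
    by (simp add: sum_sq_cscalar_prod_orthonormal[OF orthonormal_left_sing_vecs])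
  also have "\<dots> = (\<Sum>j<r. lam j)" by (rule sum_mult_indicator_lessThan[OF assms])
  finally show ?thesis .
qed

lemma total_energy: "(\<Sum>i<m. sq_vnorm (col A i)) = (\<Sum>j<l. lam j)"
proof -
  have "(\<Sum>i<m. sq_vnorm (col A i)) = (\<Sum>i<m. \<Sum>j<l. (norm (col A i \<bullet>c left_sing_vec j))\<^sup>2)"
    using parseval(1)[OF mult_conjugate_norm orthonormal_left_sing_vecs col_in_span_left_sing_vecs] by simp
  also have "\<dots> = (\<Sum>j<l. lam j)" by (rule leading_energy) simp
  finally show ?thesis .
qed

lemma mat_range_mult_leading:
  assumes "r \<le> l"
  shows "mat_range (A * mat m r (\<lambda>(i, j). t j $ i)) = span_fam k r left_sing_vec"
proof -
  let ?T = "mat m r (\<lambda>(i, j). t j $ i)"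
  have "col (A * ?T) j = A *\<^sub>v t j" if "j < r" for j
  proof -
    have "col ?T j = t j" using that assms t_carrier[of j] by (intro eq_vecI) auto
    then show ?thesis using col_mult2[OF A _ that, of ?T] by simp
  qed
  then have "mat_range (A * ?T) = span_fam k r (\<lambda>j. A *\<^sub>v t j)"
    using mat_range_span_fam[of "A * ?T" k r] A by (simp cong: span_fam_cong)
  then show ?thesis using span_images_eq_span_left_sing_vecs[OF assms] by simp
qed

lemma captured_energy_le:
  assumes sorted: "\<And>i j. i \<le> j \<Longrightarrow> j < l \<Longrightarrow> lam j \<le> lam i"
    and w: "orthonormal_fam k p w" and "p \<le> r" "r \<le> l"
  shows "(\<Sum>i<m. \<Sum>j<p. (norm (col A i \<bullet>c w j))\<^sup>2) \<le> (\<Sum>j<r. lam j)"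
proof -
  note e = orthonormal_left_sing_vecs
  define c where "c j = (\<Sum>i<p. (norm (left_sing_vec j \<bullet>c w i))\<^sup>2)" for j
  have c_bounds: "0 \<le> c j \<and> c j \<le> 1" if "j < l" for j
    using bessel_inequality[OF mult_conjugate_norm w orthonormal_fam_carrier[OF e that]]
      sq_vnorm_orthonormal_fam[OF mult_conjugate_norm e that]
    unfolding c_def by (auto intro: sum_nonneg)
  have c_sum: "(\<Sum>j<l. c j) \<le> real r"
  proof -
    have "(\<Sum>j<l. c j) = (\<Sum>i<p. \<Sum>j<l. (norm (left_sing_vec j \<bullet>c w i))\<^sup>2)"
      unfolding c_def by (rule sum.swap)
    also have "\<dots> = (\<Sum>i<p. \<Sum>j<l. (norm (w i \<bullet>c left_sing_vec j))\<^sup>2)"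
    proof (intro sum.cong refl)
      fix i j assume "i \<in> {..<p}" "j \<in> {..<l}"
      then show "(norm (left_sing_vec j \<bullet>c w i))\<^sup>2 = (norm (w i \<bullet>c left_sing_vec j))\<^sup>2"
        using cscalar_prod_swap[OF orthonormal_fam_carrier[OF w] orthonormal_fam_carrier[OF e]]
        by (simp add: norm_conjugate[OF mult_conjugate_norm])
    qed
    also have "\<dots> \<le> (\<Sum>i<p. sq_vnorm (w i))"
      by (intro sum_mono bessel_inequality[OF mult_conjugate_norm e orthonormal_fam_carrier[OF w]]) simp
    also have "\<dots> = real p" by (simp add: sq_vnorm_orthonormal_fam[OF mult_conjugate_norm w])
    finally show ?thesis using assms(3) by simp
  qed
  have "(\<Sum>j<l. lam j * c j) \<le> (\<Sum>j<r. lam j)"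
    by (rule weighted_sum_le_leading_sum[OF sorted less_imp_le[OF lam_pos] c_bounds c_sum assms(4)])
  then show ?thesis using captured_energy[OF w] unfolding c_def by simp
qed

end

theorem proposition5p3:
  fixes n m k l r :: nat
    and U :: "'a::{conjugatable_field, real_normed_field} mat"
    and \<Theta> :: "'a mat"
    and lam :: "nat \<Rightarrow> real"
    and t :: "nat \<Rightarrow> 'a vec"
  assumes K_is_R_or_C: "\<And>x::'a. x * conjugate x = of_real ((norm x)\<^sup>2)"
    and U: "U \<in> carrier_mat n m"
    and Theta: "\<Theta> \<in> carrier_mat k n"
    and l_def: "l = vec_space.rank k (\<Theta> * U)"
    and eig: "\<And>i. i < l \<Longrightarrow>
        eigenvector (mat_adjoint (\<Theta> * U) * (\<Theta> * U)) (t i) (of_real (lam i)) \<and> lam i \<noteq> 0"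
    and orthonormal: "\<And>i j. i < l \<Longrightarrow> j < l \<Longrightarrow> t i \<bullet>c t j = (if i = j then 1 else 0)"
    and sorted: "\<And>i j. i \<le> j \<Longrightarrow> j < l \<Longrightarrow> lam j \<le> lam i"
    and r: "r \<le> l"
  shows "delta_pod \<Theta> U (mat_range (U * mat m r (\<lambda>(i, j). t j $ i)))
           = (1 / real m) * (\<Sum>i\<in>{r..<l}. lam i)
       \<and> (\<forall>V. is_subspace n V \<and> V \<subseteq> mat_range U \<and> subspace_dim n V \<le> r \<longrightarrow>
            delta_pod \<Theta> U (mat_range (U * mat m r (\<lambda>(i, j). t j $ i))) \<le> delta_pod \<Theta> U V)"
proof -
  interpret pod_eigen "\<Theta> * U" k m l lam t
    using K_is_R_or_C U Theta l_def eig orthonormal by unfold_locales auto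
  define Ur where "Ur = mat_range (U * mat m r (\<lambda>(i, j). t j $ i))"
  have Ur_carrier: "Ur \<subseteq> carrier_vec n" unfolding Ur_def using U by (intro mat_range_carrier[of _ n r]) simp
  have image_Ur: "(\<lambda>v. \<Theta> *\<^sub>v v) ` Ur = span_fam k r left_sing_vec"
    unfolding Ur_def using image_mat_range_mult[OF Theta U mat_carrier] mat_range_mult_leading[OF r] by simp
  have delta_Ur: "delta_pod \<Theta> U Ur = (1 / real m) * ((\<Sum>j<l. lam j) - (\<Sum>j<r. lam j))"
    using delta_pod_eq[OF K_is_R_or_C Theta U Ur_carrier image_Ur
        orthonormal_fam_mono[OF orthonormal_left_sing_vecs r]]
    by (simp add: total_energy leading_energy[OF r])
  \<comment> \<open>Optimality holds for every subspace of dimension \<open>\<le> r\<close>.\<close>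
  have "delta_pod \<Theta> U Ur \<le> delta_pod \<Theta> U V" if V: "is_subspace n V" "subspace_dim n V \<le> r" for V
  proof -
    obtain p w where "p \<le> subspace_dim n V" "orthonormal_fam k p w" "(\<lambda>v. \<Theta> *\<^sub>v v) ` V = span_fam k p w"
      using subspace_image_orthonormal[OF K_is_R_or_C V(1) Theta] by blast
    then show ?thesis
      using delta_pod_eq[OF K_is_R_or_C Theta U is_subspace_carrier[OF V(1)]] delta_Ur V(2)
        captured_energy_le[OF sorted, of p w r] r
      by (simp add: total_energy divide_right_mono)
  qed
  moreover have "(\<Sum>i\<in>{r..<l}. lam i) = (\<Sum>j<l. lam j) - (\<Sum>j<r. lam j)"
    using sum.atLeastLessThan_concat[of 0 r l lam] r by (simp add: atLeast0LessThan)
  ultimately show ?thesis using delta_Ur unfolding Ur_def by auto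
qed

end
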